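(* A preordered group $(G,P_G)$ is an abelian object of the category $\mathsf{PreOrdGrp}$ if and only if $G$ is an abelian group and $P_G$ is a subgroup of $G$.
   Context: A preordered group is a pair $(G,P_G)$ with $G$ an additively written group and $P_G\subseteq G$ a submonoid closed under conjugation; morphisms are group homomorphisms $f$ with $f(P_G)\subseteq P_H$. This is $\mathsf{PreOrdGrp}$, a unital category (pointed, finitely complete, with $\langle1_X,0\rangle$, $\langle0,1_Y\rangle$ jointly strongly epimorphic into $X\times Y$); products are $(G\times H,P_G\times P_H)$. In a unital category, an object $X$ is commutative if there is $\phi\colon X\times X\to X$ with $\phi\circ\langle1_X,0\rangle=1_X=\phi\circ\langle0,1_X\rangle$ (this makes $X$ an internal commutative monoid), and $X$ is abelian if it is commutative and the corresponding internal commutative monoid is an internal abelian group. Equivalently, $X$ is abelian iff there is $\phi\colon X\times X\to X$ with $\phi\circ\langle0,1_X\rangle=1_X$ and $\phi\circ\langle1_X,1_X\rangle=0$. *)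

theory Defs
  imports "HOL-Algebra.Algebra"
begin

definition preordered_group :: "('a, 'b) monoid_scheme \<Rightarrow> 'a set \<Rightarrow> bool" where
  "preordered_group G P \<longleftrightarrow> group G \<and> P \<subseteq> carrier G \<and> \<one>\<^bsub>G\<^esub> \<in> P
     \<and> (\<forall>x\<in>P. \<forall>y\<in>P. x \<otimes>\<^bsub>G\<^esub> y \<in> P)
     \<and> (\<forall>g\<in>carrier G. \<forall>p\<in>P. g \<otimes>\<^bsub>G\<^esub> p \<otimes>\<^bsub>G\<^esub> inv\<^bsub>G\<^esub> g \<in> P)"

definition preord_hom :: "('a, 'b) monoid_scheme \<Rightarrow> 'a set \<Rightarrow> ('c, 'd) monoid_scheme \<Rightarrow> 'c set
    \<Rightarrow> ('a \<Rightarrow> 'c) \<Rightarrow> bool" where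
  "preord_hom G P H Q f \<longleftrightarrow> f \<in> hom G H \<and> f ` P \<subseteq> Q"

text \<open>Abelian object of PreOrdGrp: an internal commutative monoid structure
  phi : X x X \<rightarrow> X (phi o <1,0> = 1 = phi o <0,1>), the product being (G x G, P x P)
  and 0 the zero morphism, which is moreover an internal abelian group, i.e. admits an
  inverse morphism iota : X \<rightarrow> X with phi o <1,iota> = 0 = phi o <iota,1>.
  Equalities of morphisms are equalities of functions on the carrier.\<close>

definition abelian_object :: "('a, 'b) monoid_scheme \<Rightarrow> 'a set \<Rightarrow> bool" where
  "abelian_object G P \<longleftrightarrow>
     (\<exists>\<phi>. preord_hom (G \<times>\<times> G) (P \<times> P) G P \<phi>
        \<and> (\<forall>x\<in>carrier G. \<phi> (x, \<one>\<^bsub>G\<^esub>) = x)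
        \<and> (\<forall>x\<in>carrier G. \<phi> (\<one>\<^bsub>G\<^esub>, x) = x)
        \<and> (\<exists>\<iota>. preord_hom G P G P \<iota>
             \<and> (\<forall>x\<in>carrier G. \<phi> (x, \<iota> x) = \<one>\<^bsub>G\<^esub>)
             \<and> (\<forall>x\<in>carrier G. \<phi> (\<iota> x, x) = \<one>\<^bsub>G\<^esub>)))"

end

theory Submission
  imports Defs
begin

text \<open>Eckmann-Hilton: a multiplication \<phi> on X that is a morphism X \<times> X \<rightarrow> X with unit \<one>
  on both sides satisfies \<phi>(x, y) = \<phi>((x, \<one>)(\<one>, y)) = x y and likewise
  \<phi>(x, y) = \<phi>((\<one>, y)(x, \<one>)) = y x, so G is commutative and \<phi> is its multiplication.
  The inverse \<iota> of the internal group is then forced to be group inversion, and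
  \<iota>(P) \<subseteq> P says that the submonoid P is closed under inverses. Conversely, in an
  abelian group multiplication and inversion are homomorphisms, and they preserve a
  subgroup P.\<close>

lemma (in monoid) unital_hom_DirProd_eq_mult:
  assumes hom: "\<phi> \<in> hom (G \<times>\<times> G) G"
    and unit_right: "\<forall>x\<in>carrier G. \<phi> (x, \<one>) = x"
    and unit_left: "\<forall>y\<in>carrier G. \<phi> (\<one>, y) = y"
    and x: "x \<in> carrier G" and y: "y \<in> carrier G"
  shows "\<phi> (x, y) = x \<otimes> y" and "\<phi> (x, y) = y \<otimes> x"
proof -
  have \<phi>_mult: "\<phi> (p \<otimes>\<^bsub>G \<times>\<times> G\<^esub> q) = \<phi> p \<otimes> \<phi> q"
    if "p \<in> carrier G \<times> carrier G" "q \<in> carrier G \<times> carrier G" for p q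
    using hom that by (simp add: hom_mult)
  have "\<phi> (x, y) = \<phi> ((x, \<one>) \<otimes>\<^bsub>G \<times>\<times> G\<^esub> (\<one>, y))"
    using x y by simp
  also have "\<dots> = x \<otimes> y"
    using \<phi>_mult[of "(x, \<one>)" "(\<one>, y)"] x y unit_right unit_left by simp
  finally show "\<phi> (x, y) = x \<otimes> y" .
  have "\<phi> (x, y) = \<phi> ((\<one>, y) \<otimes>\<^bsub>G \<times>\<times> G\<^esub> (x, \<one>))"
    using x y by simp
  also have "\<dots> = y \<otimes> x"
    using \<phi>_mult[of "(\<one>, y)" "(x, \<one>)"] x y unit_right unit_left by simp
  finally show "\<phi> (x, y) = y \<otimes> x" .
qed

lemma (in comm_group) mult_hom_DirProd: "(\<lambda>(x, y). x \<otimes> y) \<in> hom (G \<times>\<times> G) G"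
  by (rule homI) (auto simp: m_ac)

lemma (in comm_group) inv_hom: "(\<lambda>x. inv x) \<in> hom G G"
  by (rule homI) (auto simp: inv_mult)

lemma abelian_object_imp_comm_group_subgroup:
  fixes G (structure)
  assumes "preordered_group G P" and "abelian_object G P"
  shows "comm_group G" and "subgroup P G"
proof -
  interpret group G
    using assms(1) by (simp add: preordered_group_def)
  obtain \<phi> \<iota> where \<phi>: "preord_hom (G \<times>\<times> G) (P \<times> P) G P \<phi>"
    and unit_right: "\<forall>x\<in>carrier G. \<phi> (x, \<one>) = x"
    and unit_left: "\<forall>x\<in>carrier G. \<phi> (\<one>, x) = x"
    and \<iota>: "preord_hom G P G P \<iota>"
    and \<iota>_right_inverse: "\<forall>x\<in>carrier G. \<phi> (x, \<iota> x) = \<one>"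
    using assms(2) unfolding abelian_object_def by blast
  have \<phi>_hom: "\<phi> \<in> hom (G \<times>\<times> G) G"
    using \<phi> by (simp add: preord_hom_def)
  note \<phi>_eq_mult = unital_hom_DirProd_eq_mult[OF \<phi>_hom unit_right unit_left]
  show "comm_group G"
    by (rule group_comm_groupI) (metis \<phi>_eq_mult)
  have \<iota>_eq_inv: "\<iota> x = inv x" if x: "x \<in> carrier G" for x
  proof -
    have "\<iota> x \<in> carrier G"
      using \<iota> x by (auto simp: preord_hom_def hom_def)
    moreover have "x \<otimes> \<iota> x = \<one>"
      using \<iota>_right_inverse \<phi>_eq_mult(1) x calculation by metis
    ultimately show ?thesis
      using x inv_unique[of "inv x" x "\<iota> x"] by simp
  qed
  have P_submonoid: "P \<subseteq> carrier G" "\<one> \<in> P" "\<And>x y. x \<in> P \<Longrightarrow> y \<in> P \<Longrightarrow> x \<otimes> y \<in> P"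
    using assms(1) by (auto simp: preordered_group_def)
  have "inv x \<in> P" if "x \<in> P" for x
    using \<iota> that P_submonoid(1) \<iota>_eq_inv[of x] by (force simp: preord_hom_def)
  then show "subgroup P G"
    using P_submonoid by (intro subgroupI) auto
qed

lemma comm_group_subgroup_imp_abelian_object:
  fixes G (structure)
  assumes "comm_group G" and "subgroup P G"
  shows "abelian_object G P"
proof -
  interpret comm_group G by (fact assms(1))
  interpret P: subgroup P G by (fact assms(2))
  show ?thesis
    unfolding abelian_object_def preord_hom_def
    by (intro exI[of _ "\<lambda>(x, y). x \<otimes> y"] exI[of _ "\<lambda>x. inv x"] conjI ballI
        mult_hom_DirProd inv_hom) auto
qed

theorem proposition3p7:
  fixes G :: "('a, 'b) monoid_scheme" and P :: "'a set"
  assumes "preordered_group G P"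
  shows "abelian_object G P \<longleftrightarrow> comm_group G \<and> subgroup P G"
  using abelian_object_imp_comm_group_subgroup[OF assms]
    comm_group_subgroup_imp_abelian_object by blast

end
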